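(* Let $f\in\mathcal S'(\mathbb R^d)$ (possibly depending on time), $s\ge0$, $r\in[1,\infty]$ and $t>0$. Then $$\|f\|_{\widetilde L^r_t(\dot{\mathbb B}^s_{2,1})}\le\|f\|^\ell_{\widetilde L^r_t(\dot{\mathbb B}^s_{2,1})}+2^{k_0}\|\varepsilon b(\tau)f\|^h_{\widetilde L^r_t(\dot{\mathbb B}^{s+1}_{2,1})}$$ and $$\|f\|_{\widetilde L^r_t(\dot{\mathbb B}^s_{2,1})}\le2^{-k_0}\|(\varepsilon b(\tau))^{-1}f\|^\ell_{\widetilde L^r_t(\dot{\mathbb B}^{s-1}_{2,1})}+\|f\|^h_{\widetilde L^r_t(\dot{\mathbb B}^s_{2,1})}.$$
   Context: Parameters: $\varepsilon\in(0,1]$, $\mu>0$, $\lambda\le1$, $b(t)=(1+t)^\lambda/\mu$, $k_0\in\mathbb Z$ a fixed constant, $J_t=\lfloor\log_2\frac{1}{\varepsilon b(t)}\rfloor-k_0$. $\dot\Delta_j$ are homogeneous Littlewood–Paley blocks. $\|f\|_{\widetilde L^r_t(\dot{\mathbb B}^s_{2,1})}=\sum_{j\in\mathbb Z}2^{js}\|\|\dot\Delta_jf(\tau)\|_{L^2}\|_{L^r(0,t)}$. With $I^\ell_{j,t}=\{\tau\in[0,t]:j\le J_\tau\}$, $I^h_{j,t}=\{\tau\in[0,t]:j\ge J_\tau\}$: $\|f\|^\ell_{\widetilde L^r_t(\dot{\mathbb B}^s_{2,1})}=\sum_{j:I^\ell_{j,t}\neq\emptyset}2^{js}\|\|\dot\Delta_jf(\tau)\|_{L^2}\|_{L^r(I^\ell_{j,t})}$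 and $\|f\|^h_{\widetilde L^r_t(\dot{\mathbb B}^s_{2,1})}$ defined likewise with $I^h_{j,t}$. *)

theory Defs
  imports "HOL-Analysis.Analysis" "HOL-Probability.Essential_Supremum"
begin

definition enn_powr :: "ennreal \<Rightarrow> real \<Rightarrow> ennreal" where
  "enn_powr x p = (if x = \<infinity> then \<infinity> else ennreal (enn2real x powr p))"

definition Lr_norm_on :: "ereal \<Rightarrow> real set \<Rightarrow> (real \<Rightarrow> ennreal) \<Rightarrow> ennreal" where
  "Lr_norm_on r S \<phi> =
     (if r = \<infinity> then esssup lborel (\<lambda>\<tau>. indicator S \<tau> * \<phi> \<tau>)
      else enn_powr (\<integral>\<^sup>+ \<tau>. indicator S \<tau> * enn_powr (\<phi> \<tau>) (real_of_ereal r) \<partial>lborel)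
                    (1 / real_of_ereal r))"

text \<open>Chemin--Lerner type norm
  \<open>\<Sum>_{j : I j \<noteq> {}} 2^{js} \<parallel> g j \<parallel>_{L^r(I j)}\<close>, where \<open>g j \<tau>\<close> stands for
  \<open>\<parallel>\<Delta>_j f(\<tau>)\<parallel>_{L^2}\<close> and \<open>I j\<close> is the time set attached to frequency \<open>j\<close>.\<close>
definition CL_norm :: "ereal \<Rightarrow> real \<Rightarrow> (int \<Rightarrow> real set) \<Rightarrow> (int \<Rightarrow> real \<Rightarrow> ennreal) \<Rightarrow> ennreal" where
  "CL_norm r s I g =
     (\<integral>\<^sup>+ j. (if I j \<noteq> {} then ennreal (2 powr (real_of_int j * s)) * Lr_norm_on r (I j) (g j) else 0)
        \<partial>count_space UNIV)"

definition bfun :: "real \<Rightarrow> real \<Rightarrow> real \<Rightarrow> real" where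
  "bfun \<mu> lam t = (1 + t) powr lam / \<mu>"

definition Jfun :: "real \<Rightarrow> real \<Rightarrow> real \<Rightarrow> int \<Rightarrow> real \<Rightarrow> int" where
  "Jfun \<epsilon> \<mu> lam k0 t = \<lfloor>log 2 (1 / (\<epsilon> * bfun \<mu> lam t))\<rfloor> - k0"

definition Ilow :: "real \<Rightarrow> real \<Rightarrow> real \<Rightarrow> int \<Rightarrow> real \<Rightarrow> int \<Rightarrow> real set" where
  "Ilow \<epsilon> \<mu> lam k0 t j = {\<tau> \<in> {0..t}. j \<le> Jfun \<epsilon> \<mu> lam k0 \<tau>}"

definition Ihigh :: "real \<Rightarrow> real \<Rightarrow> real \<Rightarrow> int \<Rightarrow> real \<Rightarrow> int \<Rightarrow> real set" where
  "Ihigh \<epsilon> \<mu> lam k0 t j = {\<tau> \<in> {0..t}. j \<ge> Jfun \<epsilon> \<mu> lam k0 \<tau>}"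

end

theory Submission
  imports Defs
begin

text \<open>Fix a frequency \<open>j\<close>. By definition of \<open>J\<^sub>\<tau>\<close>, the weight \<open>2\<^bsup>j+k\<^sub>0\<^esup> \<epsilon> b(\<tau>)\<close> is at most \<open>1\<close>
  on the low set \<open>I\<^sup>\<ell>\<^sub>j = {j \<le> J\<^sub>\<tau>}\<close> and exceeds \<open>1\<close> on \<open>{J\<^sub>\<tau> < j} \<subseteq> I\<^sup>h\<^sub>j\<close>; these two sets
  cover \<open>[0,t]\<close>, and so do \<open>I\<^sup>\<ell>\<^sub>j\<close> and \<open>I\<^sup>h\<^sub>j\<close>. The time norm \<open>L\<^sup>r\<close> is monotone, positively
  homogeneous and subadditive with respect to covers of the time set (for \<open>r < \<infinity>\<close> because
  \<open>x \<mapsto> x\<^bsup>1/r\<^esup>\<close> is subadditive), so the \<open>j\<close>-th term of the Chemin--Lerner norm is bounded by its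
  low part plus \<open>2\<^bsup>k\<^sub>0\<^esup> 2\<^sup>j\<close> times the high part of \<open>\<epsilon> b f\<close>, or by the high part plus
  \<open>2\<^bsup>-k\<^sub>0\<^esup> 2\<^bsup>-j\<^esup>\<close> times the low part of \<open>(\<epsilon> b)\<^sup>-\<^sup>1 f\<close>. Summing over \<open>j\<close> gives both inequalities;
  only \<open>\<epsilon>, \<mu> > 0\<close> and \<open>r \<ge> 1\<close> are needed.\<close>

lemma measurable_enn_powr [measurable]:
  assumes [measurable]: "f \<in> borel_measurable M"
  shows "(\<lambda>x. enn_powr (f x) p) \<in> borel_measurable M"
  unfolding enn_powr_def by measurable

lemma enn_powr_0: "0 < q \<Longrightarrow> enn_powr 0 q = 0"
  by (simp add: enn_powr_def)

lemma enn_powr_mono: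
  assumes "x \<le> y" "0 \<le> q"
  shows "enn_powr x q \<le> enn_powr y q"
proof (cases "y = \<infinity>")
  case False
  with assms(1) have "x \<noteq> \<infinity>" "enn2real x \<le> enn2real y"
    by (auto simp: enn2real_mono top.not_eq_extremum top.extremum_unique)
  with False assms(2) show ?thesis
    by (simp add: enn_powr_def ennreal_leI powr_mono2)
qed (simp add: enn_powr_def)

lemma enn_powr_ennreal_mult:
  assumes "0 < c"
  shows "enn_powr (ennreal c * x) p = ennreal (c powr p) * enn_powr x p"
proof (cases "x = \<infinity>")
  case True
  with assms show ?thesis by (simp add: enn_powr_def ennreal_mult_top)
next
  case False
  with assms have "ennreal c * x \<noteq> \<infinity>" "enn2real (ennreal c * x) = c * enn2real x"
    by (simp_all add: ennreal_mult_eq_top_iff enn2real_mult)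
  with False assms show ?thesis
    by (simp add: enn_powr_def powr_mult ennreal_mult)
qed

lemma powr_add_le_add_powr:
  fixes a b q :: real
  assumes "0 \<le> a" "0 \<le> b" "0 < q" "q \<le> 1"
  shows "(a + b) powr q \<le> a powr q + b powr q"
proof (cases "a + b = 0")
  case False
  with assms have ab: "0 < a + b" by simp
  have frac_le: "u \<le> u powr q" if "0 \<le> u" "u \<le> 1" for u :: real
    using that assms(3,4) powr_mono'[of q 1 u] by (cases "u = 0") auto
  define u v where "u = a / (a + b)" and "v = b / (a + b)"
  have "u + v = 1" using ab by (simp add: u_def v_def add_divide_distrib[symmetric])
  moreover have "u \<le> u powr q" "v \<le> v powr q"
    using assms ab by (auto intro!: frac_le simp: u_def v_def)
  ultimately have "(a + b) powr q * 1 \<le> (a + b) powr q * (u powr q + v powr q)"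
    by (intro mult_left_mono) auto
  also have "\<dots> = ((a + b) * u) powr q + ((a + b) * v) powr q"
    using assms ab by (simp add: powr_mult[symmetric] distrib_left u_def v_def)
  also have "\<dots> = a powr q + b powr q"
    using ab by (simp add: u_def v_def)
  finally show ?thesis by simp
qed (use assms in simp)

lemma enn_powr_add_le:
  assumes "0 < q" "q \<le> 1"
  shows "enn_powr (a + b) q \<le> enn_powr a q + enn_powr b q"
proof (cases "a = \<infinity> \<or> b = \<infinity>")
  case False
  then have "enn2real (a + b) = enn2real a + enn2real b"
    by (simp add: enn2real_plus less_top)
  then have "enn2real (a + b) powr q \<le> enn2real a powr q + enn2real b powr q"
    using powr_add_le_add_powr[of "enn2real a" "enn2real b" q] assms by simp
  then have "ennreal (enn2real (a + b) powr q)
      \<le> ennreal (enn2real a powr q) + ennreal (enn2real b powr q)"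
    by (simp add: ennreal_leI flip: ennreal_plus)
  with False show ?thesis by (simp add: enn_powr_def)
qed (auto simp: enn_powr_def)

lemma real_of_ereal_ge_1: "1 \<le> r \<Longrightarrow> r \<noteq> \<infinity> \<Longrightarrow> 1 \<le> real_of_ereal r"
  by (cases r) auto

lemma Lr_norm_on_empty:
  assumes "1 \<le> r"
  shows "Lr_norm_on r {} \<phi> = 0"
  using assms real_of_ereal_ge_1[OF assms]
  by (cases "r = \<infinity>") (simp_all add: Lr_norm_on_def esssup_const enn_powr_0)

lemma Lr_norm_on_mono:
  assumes "1 \<le> r" and [measurable]: "S \<in> sets borel" "\<phi> \<in> borel_measurable borel"
    and "S \<subseteq> T" and "\<And>\<tau>. \<tau> \<in> S \<Longrightarrow> \<phi> \<tau> \<le> \<psi> \<tau>"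
  shows "Lr_norm_on r S \<phi> \<le> Lr_norm_on r T \<psi>"
proof (cases "r = \<infinity>")
  case True
  have "esssup lborel (\<lambda>\<tau>. indicator S \<tau> * \<phi> \<tau>) \<le> esssup lborel (\<lambda>\<tau>. indicator T \<tau> * \<psi> \<tau>)"
    using assms(4,5) by (intro esssup_mono) (auto simp: indicator_def)
  with True show ?thesis by (simp add: Lr_norm_on_def)
next
  case False
  define p where "p = real_of_ereal r"
  have p: "1 \<le> p" using real_of_ereal_ge_1[OF assms(1) False] by (simp add: p_def)
  have "(\<integral>\<^sup>+ \<tau>. indicator S \<tau> * enn_powr (\<phi> \<tau>) p \<partial>lborel)
      \<le> (\<integral>\<^sup>+ \<tau>. indicator T \<tau> * enn_powr (\<psi> \<tau>) p \<partial>lborel)"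
    using assms(4,5) p by (intro nn_integral_mono) (auto simp: indicator_def enn_powr_mono)
  with False p show ?thesis
    by (simp add: Lr_norm_on_def p_def[symmetric] enn_powr_mono)
qed

lemma Lr_norm_on_cmult_le:
  assumes "1 \<le> r" and [measurable]: "S \<in> sets borel" "\<phi> \<in> borel_measurable borel"
    and "0 < c"
  shows "Lr_norm_on r S (\<lambda>\<tau>. ennreal c * \<phi> \<tau>) \<le> ennreal c * Lr_norm_on r S \<phi>"
proof (cases "r = \<infinity>")
  case True
  define E where "E = esssup lborel (\<lambda>\<tau>. indicator S \<tau> * \<phi> \<tau>)"
  have "AE \<tau> in lborel. indicator S \<tau> * \<phi> \<tau> \<le> E"
    unfolding E_def by (rule esssup_AE)
  then have "AE \<tau> in lborel. indicator S \<tau> * (ennreal c * \<phi> \<tau>) \<le> ennreal c * E"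
    by eventually_elim (metis mult.left_commute mult_left_mono zero_le)
  then have "esssup lborel (\<lambda>\<tau>. indicator S \<tau> * (ennreal c * \<phi> \<tau>)) \<le> ennreal c * E"
    by (intro esssup_I) auto
  with True show ?thesis by (simp add: Lr_norm_on_def E_def)
next
  case False
  define p where "p = real_of_ereal r"
  have p: "1 \<le> p" using real_of_ereal_ge_1[OF assms(1) False] by (simp add: p_def)
  have "(\<integral>\<^sup>+ \<tau>. indicator S \<tau> * enn_powr (ennreal c * \<phi> \<tau>) p \<partial>lborel)
      = (\<integral>\<^sup>+ \<tau>. ennreal (c powr p) * (indicator S \<tau> * enn_powr (\<phi> \<tau>) p) \<partial>lborel)"
    using assms(4) by (intro nn_integral_cong) (simp add: enn_powr_ennreal_mult ac_simps)
  also have "\<dots> = ennreal (c powr p) * (\<integral>\<^sup>+ \<tau>. indicator S \<tau> * enn_powr (\<phi> \<tau>) p \<partial>lborel)"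
    by (rule nn_integral_cmult) measurable
  finally have "Lr_norm_on r S (\<lambda>\<tau>. ennreal c * \<phi> \<tau>)
      = ennreal ((c powr p) powr (1 / p)) * Lr_norm_on r S \<phi>"
    using False assms(4) by (simp add: Lr_norm_on_def p_def[symmetric] enn_powr_ennreal_mult)
  also have "(c powr p) powr (1 / p) = c"
    using assms(4) p by (simp add: powr_powr)
  finally show ?thesis by simp
qed

lemma Lr_norm_on_le_cmult:
  assumes "1 \<le> r" and [measurable]: "S \<in> sets borel" "\<phi> \<in> borel_measurable borel"
    "\<psi> \<in> borel_measurable borel"
    and "0 < c" and "\<And>\<tau>. \<tau> \<in> S \<Longrightarrow> \<phi> \<tau> \<le> ennreal c * \<psi> \<tau>"
  shows "Lr_norm_on r S \<phi> \<le> ennreal c * Lr_norm_on r S \<psi>"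
  using Lr_norm_on_mono[OF assms(1-3) order_refl assms(6)] Lr_norm_on_cmult_le[OF assms(1,2,4,5)]
  by (rule order_trans)

lemma Lr_norm_on_le_add_cover:
  assumes "1 \<le> r" and [measurable]: "A \<in> sets borel" "B \<in> sets borel" "T \<in> sets borel"
    "\<phi> \<in> borel_measurable borel"
    and "T \<subseteq> A \<union> B"
  shows "Lr_norm_on r T \<phi> \<le> Lr_norm_on r A \<phi> + Lr_norm_on r B \<phi>"
proof (cases "r = \<infinity>")
  case True
  define EA EB where "EA = esssup lborel (\<lambda>\<tau>. indicator A \<tau> * \<phi> \<tau>)"
    and "EB = esssup lborel (\<lambda>\<tau>. indicator B \<tau> * \<phi> \<tau>)"
  have cover: "indicator T \<tau> * \<phi> \<tau> \<le> indicator A \<tau> * \<phi> \<tau> + indicator B \<tau> * \<phi> \<tau>" for \<tau>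
    using assms(6) by (auto simp: indicator_def)
  have "AE \<tau> in lborel. indicator T \<tau> * \<phi> \<tau> \<le> EA + EB"
    using esssup_AE[of "\<lambda>\<tau>. indicator A \<tau> * \<phi> \<tau>" lborel]
      esssup_AE[of "\<lambda>\<tau>. indicator B \<tau> * \<phi> \<tau>" lborel]
    unfolding EA_def[symmetric] EB_def[symmetric]
  proof eventually_elim
    case (elim \<tau>)
    then show ?case using cover[of \<tau>] add_mono order_trans by blast
  qed
  then have "esssup lborel (\<lambda>\<tau>. indicator T \<tau> * \<phi> \<tau>) \<le> EA + EB"
    by (intro esssup_I) auto
  with True show ?thesis by (simp add: Lr_norm_on_def EA_def EB_def)
next
  case False
  define p where "p = real_of_ereal r"
  have p: "1 \<le> p" using real_of_ereal_ge_1[OF assms(1) False] by (simp add: p_def)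
  define IA IB where "IA = (\<integral>\<^sup>+ \<tau>. indicator A \<tau> * enn_powr (\<phi> \<tau>) p \<partial>lborel)"
    and "IB = (\<integral>\<^sup>+ \<tau>. indicator B \<tau> * enn_powr (\<phi> \<tau>) p \<partial>lborel)"
  have "(\<integral>\<^sup>+ \<tau>. indicator T \<tau> * enn_powr (\<phi> \<tau>) p \<partial>lborel)
      \<le> (\<integral>\<^sup>+ \<tau>. indicator A \<tau> * enn_powr (\<phi> \<tau>) p + indicator B \<tau> * enn_powr (\<phi> \<tau>) p \<partial>lborel)"
    using assms(6) by (intro nn_integral_mono) (auto simp: indicator_def)
  also have "\<dots> = IA + IB"
    unfolding IA_def IB_def by (rule nn_integral_add) measurable
  finally have "enn_powr (\<integral>\<^sup>+ \<tau>. indicator T \<tau> * enn_powr (\<phi> \<tau>) p \<partial>lborel) (1 / p)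
      \<le> enn_powr (IA + IB) (1 / p)"
    using p by (intro enn_powr_mono) auto
  also have "\<dots> \<le> enn_powr IA (1 / p) + enn_powr IB (1 / p)"
    using p by (intro enn_powr_add_le) auto
  finally show ?thesis
    using False by (simp add: Lr_norm_on_def p_def IA_def IB_def)
qed

lemma Lr_norm_on_le_add_weighted:
  assumes "1 \<le> r" and [measurable]: "A \<in> sets borel" "B \<in> sets borel" "T \<in> sets borel"
    "\<phi> \<in> borel_measurable borel" "w \<in> borel_measurable borel"
    and "T \<subseteq> A \<union> B" and "0 < c" and "\<And>\<tau>. \<tau> \<in> B \<Longrightarrow> 1 \<le> c * w \<tau>"
  shows "Lr_norm_on r T \<phi> \<le> Lr_norm_on r A \<phi> + ennreal c * Lr_norm_on r B (\<lambda>\<tau>. ennreal (w \<tau>) * \<phi> \<tau>)"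
proof -
  have "\<phi> \<tau> \<le> ennreal c * (ennreal (w \<tau>) * \<phi> \<tau>)" if "\<tau> \<in> B" for \<tau>
  proof -
    have "1 \<le> ennreal (c * w \<tau>)"
      using assms(9)[OF that] by (simp add: ennreal_1[symmetric] del: ennreal_1)
    then have "1 * \<phi> \<tau> \<le> ennreal (c * w \<tau>) * \<phi> \<tau>"
      by (rule mult_right_mono) simp
    then show ?thesis
      using assms(8) by (simp add: ennreal_mult' mult.assoc)
  qed
  then have "Lr_norm_on r B \<phi> \<le> ennreal c * Lr_norm_on r B (\<lambda>\<tau>. ennreal (w \<tau>) * \<phi> \<tau>)"
    using assms(8) by (intro Lr_norm_on_le_cmult[OF assms(1)]) auto
  then show ?thesis
    using Lr_norm_on_le_add_cover[OF assms(1-5,7)] by (meson add_left_mono order_trans)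
qed

lemma CL_norm_eq_nn_integral:
  assumes "1 \<le> r"
  shows "CL_norm r s I g
    = (\<integral>\<^sup>+ j. ennreal (2 powr (real_of_int j * s)) * Lr_norm_on r (I j) (g j) \<partial>count_space UNIV)"
  unfolding CL_norm_def by (intro nn_integral_cong) (auto simp: Lr_norm_on_empty[OF assms])

lemma CL_norm_le_add_scaled:
  assumes "1 \<le> r"
    and "\<And>j. Lr_norm_on r (I j) (g j)
      \<le> Lr_norm_on r (I\<^sub>1 j) (g\<^sub>1 j) + ennreal (2 powr (real_of_int j * d + e)) * Lr_norm_on r (I\<^sub>2 j) (g\<^sub>2 j)"
  shows "CL_norm r s I g \<le> CL_norm r s I\<^sub>1 g\<^sub>1 + ennreal (2 powr e) * CL_norm r (s + d) I\<^sub>2 g\<^sub>2"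
proof -
  let ?P = "\<lambda>j \<sigma>. ennreal (2 powr (real_of_int j * \<sigma>))"
  have "?P j s * Lr_norm_on r (I j) (g j)
      \<le> ?P j s * Lr_norm_on r (I\<^sub>1 j) (g\<^sub>1 j) + ennreal (2 powr e) * (?P j (s + d) * Lr_norm_on r (I\<^sub>2 j) (g\<^sub>2 j))"
    for j
  proof -
    have "?P j s * ennreal (2 powr (real_of_int j * d + e)) = ennreal (2 powr e) * ?P j (s + d)"
      by (simp add: ennreal_mult'[symmetric] powr_add[symmetric] algebra_simps)
    then show ?thesis
      using mult_left_mono[OF assms(2)[of j], of "?P j s"]
      by (simp add: distrib_left mult.assoc[symmetric])
  qed
  then have "CL_norm r s I g \<le> (\<integral>\<^sup>+ j. ?P j s * Lr_norm_on r (I\<^sub>1 j) (g\<^sub>1 j)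
      + ennreal (2 powr e) * (?P j (s + d) * Lr_norm_on r (I\<^sub>2 j) (g\<^sub>2 j)) \<partial>count_space UNIV)"
    unfolding CL_norm_eq_nn_integral[OF assms(1)] by (rule nn_integral_mono)
  then show ?thesis
    by (simp add: CL_norm_eq_nn_integral[OF assms(1)] nn_integral_add nn_integral_cmult)
qed

lemma le_floor_log2_inverse_iff:
  fixes x :: real and n :: int
  assumes "0 < x"
  shows "n \<le> \<lfloor>log 2 (1 / x)\<rfloor> \<longleftrightarrow> 2 powr n * x \<le> 1"
  using assms by (simp add: le_floor_iff le_log_iff field_simps)

lemma bfun_pos: "0 < \<mu> \<Longrightarrow> 0 \<le> \<tau> \<Longrightarrow> 0 < bfun \<mu> lam \<tau>"
  by (simp add: bfun_def)

lemma le_Jfun_iff: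
  assumes "0 < \<epsilon>" "0 < \<mu>" "0 \<le> \<tau>"
  shows "j \<le> Jfun \<epsilon> \<mu> lam k0 \<tau> \<longleftrightarrow> 2 powr (j + k0) * (\<epsilon> * bfun \<mu> lam \<tau>) \<le> 1"
  using le_floor_log2_inverse_iff[of "\<epsilon> * bfun \<mu> lam \<tau>" "j + k0"] assms bfun_pos[of \<mu> \<tau> lam]
  by (simp add: Jfun_def algebra_simps)

lemma measurable_bfun [measurable]: "bfun \<mu> lam \<in> borel_measurable borel"
  unfolding bfun_def by measurable

lemma measurable_Jfun [measurable]: "Jfun \<epsilon> \<mu> lam k0 \<in> borel_measurable borel"
  unfolding Jfun_def by measurable

lemma sets_Ilow [measurable]: "Ilow \<epsilon> \<mu> lam k0 t j \<in> sets borel"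
  unfolding Ilow_def by measurable

lemma sets_Ihigh [measurable]: "Ihigh \<epsilon> \<mu> lam k0 t j \<in> sets borel"
  unfolding Ihigh_def by measurable

lemma Lr_norm_on_le_low_add_high:
  assumes "1 \<le> r" "0 < \<epsilon>" "0 < \<mu>" and [measurable]: "\<phi> \<in> borel_measurable borel"
  shows "Lr_norm_on r {0..t} \<phi>
    \<le> Lr_norm_on r (Ilow \<epsilon> \<mu> lam k0 t j) \<phi>
      + ennreal (2 powr (real_of_int j + real_of_int k0))
        * Lr_norm_on r (Ihigh \<epsilon> \<mu> lam k0 t j) (\<lambda>\<tau>. ennreal (\<epsilon> * bfun \<mu> lam \<tau>) * \<phi> \<tau>)"
proof -
  define B where "B = {\<tau> \<in> {0..t}. Jfun \<epsilon> \<mu> lam k0 \<tau> < j}"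
  have [measurable]: "B \<in> sets borel" unfolding B_def by measurable
  have "Lr_norm_on r {0..t} \<phi>
    \<le> Lr_norm_on r (Ilow \<epsilon> \<mu> lam k0 t j) \<phi>
      + ennreal (2 powr (real_of_int j + real_of_int k0))
        * Lr_norm_on r B (\<lambda>\<tau>. ennreal (\<epsilon> * bfun \<mu> lam \<tau>) * \<phi> \<tau>)"
    using assms le_Jfun_iff[OF assms(2,3)]
    by (intro Lr_norm_on_le_add_weighted) (auto simp: Ilow_def B_def not_le[symmetric])
  also have "\<dots> \<le> Lr_norm_on r (Ilow \<epsilon> \<mu> lam k0 t j) \<phi>
      + ennreal (2 powr (real_of_int j + real_of_int k0))
        * Lr_norm_on r (Ihigh \<epsilon> \<mu> lam k0 t j) (\<lambda>\<tau>. ennreal (\<epsilon> * bfun \<mu> lam \<tau>) * \<phi> \<tau>)"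
    using assms(1) by (intro add_left_mono mult_left_mono Lr_norm_on_mono) (auto simp: B_def Ihigh_def)
  finally show ?thesis by simp
qed

lemma Lr_norm_on_le_high_add_low:
  assumes "1 \<le> r" "0 < \<epsilon>" "0 < \<mu>" and [measurable]: "\<phi> \<in> borel_measurable borel"
  shows "Lr_norm_on r {0..t} \<phi>
    \<le> Lr_norm_on r (Ihigh \<epsilon> \<mu> lam k0 t j) \<phi>
      + ennreal (2 powr (- real_of_int j - real_of_int k0))
        * Lr_norm_on r (Ilow \<epsilon> \<mu> lam k0 t j) (\<lambda>\<tau>. ennreal (1 / (\<epsilon> * bfun \<mu> lam \<tau>)) * \<phi> \<tau>)"
proof (rule Lr_norm_on_le_add_weighted)
  fix \<tau> assume "\<tau> \<in> Ilow \<epsilon> \<mu> lam k0 t j"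
  with assms le_Jfun_iff[OF assms(2,3)] bfun_pos[OF assms(3)]
  have "0 < \<epsilon> * bfun \<mu> lam \<tau>" "2 powr (real_of_int j + real_of_int k0) * (\<epsilon> * bfun \<mu> lam \<tau>) \<le> 1"
    by (auto simp: Ilow_def)
  moreover have "2 powr (- real_of_int j - real_of_int k0) = 1 / 2 powr (real_of_int j + real_of_int k0)"
    by (simp add: powr_minus_divide[symmetric])
  ultimately show "1 \<le> 2 powr (- real_of_int j - real_of_int k0) * (1 / (\<epsilon> * bfun \<mu> lam \<tau>))"
    by (simp add: le_divide_eq mult.commute)
qed (use assms in \<open>auto simp: Ilow_def Ihigh_def\<close>)

theorem lemma3p1:
  fixes \<epsilon> \<mu> lam s t :: real and k0 :: int and r :: ereal
    and g :: "int \<Rightarrow> real \<Rightarrow> ennreal"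
  assumes "0 < \<epsilon>" "\<epsilon> \<le> 1" "0 < \<mu>" "lam \<le> 1"
    and "0 \<le> s" "1 \<le> r" "0 < t"
    and "\<And>j. g j \<in> borel_measurable lborel"
  shows "(CL_norm r s (\<lambda>j. {0..t}) g
           \<le> CL_norm r s (Ilow \<epsilon> \<mu> lam k0 t) g
             + ennreal (2 powr real_of_int k0)
               * CL_norm r (s + 1) (Ihigh \<epsilon> \<mu> lam k0 t)
                   (\<lambda>j \<tau>. ennreal (\<epsilon> * bfun \<mu> lam \<tau>) * g j \<tau>))
       \<and> (CL_norm r s (\<lambda>j. {0..t}) g
           \<le> ennreal (2 powr (- real_of_int k0))
               * CL_norm r (s - 1) (Ilow \<epsilon> \<mu> lam k0 t)
                   (\<lambda>j \<tau>. ennreal (1 / (\<epsilon> * bfun \<mu> lam \<tau>)) * g j \<tau>)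
             + CL_norm r s (Ihigh \<epsilon> \<mu> lam k0 t) g)"
proof
  have g: "g j \<in> borel_measurable borel" for j
    using assms(8)[of j] by simp
  show "CL_norm r s (\<lambda>j. {0..t}) g
           \<le> CL_norm r s (Ilow \<epsilon> \<mu> lam k0 t) g
             + ennreal (2 powr real_of_int k0)
               * CL_norm r (s + 1) (Ihigh \<epsilon> \<mu> lam k0 t)
                   (\<lambda>j \<tau>. ennreal (\<epsilon> * bfun \<mu> lam \<tau>) * g j \<tau>)"
    using Lr_norm_on_le_low_add_high[OF assms(6,1,3) g]
    by (intro CL_norm_le_add_scaled[where d = 1, OF assms(6)]) simp
  have "CL_norm r s (\<lambda>j. {0..t}) g
           \<le> CL_norm r s (Ihigh \<epsilon> \<mu> lam k0 t) g
             + ennreal (2 powr (- real_of_int k0))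
               * CL_norm r (s + - 1) (Ilow \<epsilon> \<mu> lam k0 t)
                   (\<lambda>j \<tau>. ennreal (1 / (\<epsilon> * bfun \<mu> lam \<tau>)) * g j \<tau>)"
    using Lr_norm_on_le_high_add_low[OF assms(6,1,3) g]
    by (intro CL_norm_le_add_scaled[where d = "- 1", OF assms(6)]) simp
  then show "CL_norm r s (\<lambda>j. {0..t}) g
           \<le> ennreal (2 powr (- real_of_int k0))
               * CL_norm r (s - 1) (Ilow \<epsilon> \<mu> lam k0 t)
                   (\<lambda>j \<tau>. ennreal (1 / (\<epsilon> * bfun \<mu> lam \<tau>)) * g j \<tau>)
             + CL_norm r s (Ihigh \<epsilon> \<mu> lam k0 t) g"
    by (simp add: add.commute)
qed

end
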